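(* Let $k,t$ be integers with $k\geq t\geq 1$. Then there exists a connected graph $G=G_{k,t}$ with $\Delta(G)=2t^2+1$ and $\operatorname{diam}(G)=2t^2+1+k$ such that $prc(G)\geq rc(G)+t$.
   Context: A path in an edge-coloured graph is a rainbow path if its edges receive pairwise distinct colours. The rainbow connection number $rc(G)$ of a connected graph $G$ is the minimum number of colours in an edge-colouring such that every two distinct vertices are joined by a rainbow path. The proper rainbow connection number $prc(G)$ is the minimum number of colours in a proper edge-colouring (adjacent edges get distinct colours) such that every two distinct vertices are joined by a rainbow path. $\Delta(G)$ is the maximum degree and $\operatorname{diam}(G)$ the diameter. *)

theory Defs
  imports Main
begin

definition simple_graph :: "'a set \<Rightarrow> 'a set set \<Rightarrow> bool" where
  "simple_graph V E \<longleftrightarrow> finite V \<and> (\<forall>e\<in>E. \<exists>u v. e = {u, v} \<and> u \<in> V \<and> v \<in> V \<and> u \<noteq> v)"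

definition is_path :: "'a set \<Rightarrow> 'a set set \<Rightarrow> 'a list \<Rightarrow> 'a \<Rightarrow> 'a \<Rightarrow> bool" where
  "is_path V E p u v \<longleftrightarrow> p \<noteq> [] \<and> hd p = u \<and> last p = v \<and> distinct p \<and> set p \<subseteq> V
     \<and> (\<forall>i. Suc i < length p \<longrightarrow> {p ! i, p ! Suc i} \<in> E)"

definition path_edges :: "'a list \<Rightarrow> 'a set list" where
  "path_edges p = map (\<lambda>i. {p ! i, p ! Suc i}) [0..<length p - 1]"

definition graph_connected :: "'a set \<Rightarrow> 'a set set \<Rightarrow> bool" where
  "graph_connected V E \<longleftrightarrow> V \<noteq> {} \<and> (\<forall>u\<in>V. \<forall>v\<in>V. \<exists>p. is_path V E p u v)"

definition degree :: "'a set set \<Rightarrow> 'a \<Rightarrow> nat" where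
  "degree E v = card {e \<in> E. v \<in> e}"

definition max_degree :: "'a set \<Rightarrow> 'a set set \<Rightarrow> nat" where
  "max_degree V E = Max (degree E ` V)"

definition gdist :: "'a set \<Rightarrow> 'a set set \<Rightarrow> 'a \<Rightarrow> 'a \<Rightarrow> nat" where
  "gdist V E u v = (LEAST n. \<exists>p. is_path V E p u v \<and> length p - 1 = n)"

definition diam :: "'a set \<Rightarrow> 'a set set \<Rightarrow> nat" where
  "diam V E = Max {gdist V E u v | u v. u \<in> V \<and> v \<in> V}"

definition rainbow_path :: "('a set \<Rightarrow> nat) \<Rightarrow> 'a list \<Rightarrow> bool" where
  "rainbow_path c p \<longleftrightarrow> distinct (map c (path_edges p))"

definition rainbow_connected :: "'a set \<Rightarrow> 'a set set \<Rightarrow> ('a set \<Rightarrow> nat) \<Rightarrow> bool" where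
  "rainbow_connected V E c \<longleftrightarrow>
     (\<forall>u\<in>V. \<forall>v\<in>V. u \<noteq> v \<longrightarrow> (\<exists>p. is_path V E p u v \<and> rainbow_path c p))"

definition proper_colouring :: "'a set set \<Rightarrow> ('a set \<Rightarrow> nat) \<Rightarrow> bool" where
  "proper_colouring E c \<longleftrightarrow> (\<forall>e\<in>E. \<forall>f\<in>E. e \<noteq> f \<and> e \<inter> f \<noteq> {} \<longrightarrow> c e \<noteq> c f)"

definition rc :: "'a set \<Rightarrow> 'a set set \<Rightarrow> nat" where
  "rc V E = (LEAST k. \<exists>c. c ` E \<subseteq> {..<k} \<and> rainbow_connected V E c)"

definition prc :: "'a set \<Rightarrow> 'a set set \<Rightarrow> nat" where
  "prc V E = (LEAST k. \<exists>c. c ` E \<subseteq> {..<k} \<and> proper_colouring E c \<and> rainbow_connected V E c)"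

end

theory Submission
  imports Defs
begin

(* The graph is the path 0 - 1 - ... - L glued at L to the centre of the friendship graph with
   T = t^2 triangles, where L = 2 t^2 + k; its maximum degree 2T + 1 is attained at L and its
   diameter is L + 1. Every path from 0 into a triangle uses all L tail edges and a spoke at L,
   so a rainbow-connecting colouring gives the tail edges L distinct colours and each spoke on
   such a path a new one. Properness forces the spokes used to reach the T triangles to get
   T distinct colours, and two edges of the first triangle to get two new colours, so
   prc >= L + max 2 T. Without properness L + min 2 T colours suffice, so the gap is at least
   max 2 (t^2) - min 2 (t^2) >= t. *)

lemma path_edges_Nil [simp]: "path_edges [] = []"
  by (simp add: path_edges_def)

lemma path_edges_singleton [simp]: "path_edges [a] = []"
  by (simp add: path_edges_def)

lemma path_edges_Cons_Cons [simp]: "path_edges (a # b # p) = {a, b} # path_edges (b # p)"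
  unfolding path_edges_def by (simp add: upt_conv_Cons map_Suc_upt[symmetric] del: upt_Suc)

lemma length_path_edges: "length (path_edges p) = length p - 1"
  by (simp add: path_edges_def)

lemma path_edges_subset: "e \<in> set (path_edges p) \<Longrightarrow> e \<subseteq> set p"
  by (induction p rule: induct_list012) auto

lemma distinct_path_edges: "distinct p \<Longrightarrow> distinct (path_edges p)"
  by (induction p rule: induct_list012) (auto dest: path_edges_subset)

lemma path_edges_snoc: "p \<noteq> [] \<Longrightarrow> path_edges (p @ [w]) = path_edges p @ [{last p, w}]"
  by (induction p rule: induct_list012) auto

lemma path_edges_upt: "path_edges [i..<Suc j] = map (\<lambda>m. {m, Suc m}) [i..<j]"
  by (rule nth_equalityI) (auto simp: path_edges_def simp del: upt_Suc)

lemma path_edges_rev: "path_edges (rev p) = rev (path_edges p)"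
proof (induction p rule: induct_list012)
  case (3 a b p)
  have "path_edges (rev (a # b # p)) = path_edges (rev (b # p) @ [a])"
    by simp
  also have "\<dots> = path_edges (rev (b # p)) @ [{b, a}]"
    by (subst path_edges_snoc) (auto simp: last_rev)
  finally show ?case using 3 by (simp add: insert_commute)
qed auto

lemma is_path_singleton [simp]: "is_path V E [a] u v \<longleftrightarrow> a = u \<and> a = v \<and> a \<in> V"
  by (auto simp: is_path_def)

lemma is_path_Cons_Cons [simp]:
  "is_path V E (a # b # p) u v \<longleftrightarrow>
     a = u \<and> a \<in> V \<and> a \<notin> set (b # p) \<and> {a, b} \<in> E \<and> is_path V E (b # p) b v"
  unfolding is_path_def by (auto simp: less_Suc_eq_0_disj nth_Cons split: nat.splits)

lemma is_path_edges_subset: "is_path V E p u v \<Longrightarrow> set (path_edges p) \<subseteq> E"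
  unfolding is_path_def path_edges_def by auto

lemma is_path_rev: "is_path V E p u v \<Longrightarrow> is_path V E (rev p) v u"
proof -
  assume p: "is_path V E p u v"
  have "{rev p ! i, rev p ! Suc i} \<in> E" if "Suc i < length p" for i
  proof -
    have "{p ! (length p - Suc (Suc i)), p ! Suc (length p - Suc (Suc i))} \<in> E"
      using p that unfolding is_path_def by (metis Suc_diff_Suc diff_less lessI less_trans zero_less_Suc)
    moreover have "Suc (length p - Suc (Suc i)) = length p - Suc i"
      using that by simp
    ultimately show ?thesis
      using that by (simp add: rev_nth insert_commute)
  qed
  with p show ?thesis
    unfolding is_path_def by (auto simp: hd_rev last_rev)
qed

lemma is_path_snoc:
  assumes p: "is_path V E p u v" and vw: "{v, w} \<in> E" "w \<in> V" "w \<notin> set p"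
  shows "is_path V E (p @ [w]) u w"
proof -
  have "{(p @ [w]) ! i, (p @ [w]) ! Suc i} \<in> E" if "Suc i < length (p @ [w])" for i
  proof (cases "Suc i < length p")
    case True
    with p show ?thesis by (simp add: is_path_def nth_append)
  next
    case False
    with that p have "i = length p - 1" "p \<noteq> []" "last p = v"
      by (auto simp: is_path_def)
    with vw show ?thesis by (simp add: nth_append last_conv_nth)
  qed
  with p vw show ?thesis
    unfolding is_path_def by auto
qed

lemma is_path_crosses:
  assumes "is_path V E p u v" "u \<in> S" "v \<notin> S"
  shows "\<exists>a b. {a, b} \<in> set (path_edges p) \<and> a \<in> S \<and> b \<notin> S"
proof -
  have "p \<noteq> [] \<Longrightarrow> hd p \<in> S \<Longrightarrow> last p \<notin> S \<Longrightarrow> ?thesis"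
    by (induction p rule: induct_list012) auto
  with assms show ?thesis
    unfolding is_path_def by blast
qed

lemma rainbow_connectedE:
  assumes "rainbow_connected V E c" "u \<in> V" "v \<in> V" "u \<noteq> v"
  obtains p where "is_path V E p u v" "rainbow_path c p"
  using assms unfolding rainbow_connected_def by blast

lemma rainbow_path_rev [simp]: "rainbow_path c (rev p) \<longleftrightarrow> rainbow_path c p"
  by (simp add: rainbow_path_def path_edges_rev rev_map[symmetric])

lemma rainbow_path_inj_on: "rainbow_path c p \<Longrightarrow> inj_on c (set (path_edges p))"
  by (simp add: rainbow_path_def distinct_map)

lemma rainbow_path_new_colour:
  assumes "rainbow_path c p" "P \<subseteq> set (path_edges p)" "e \<in> set (path_edges p)" "e \<notin> P"
  shows "c e \<notin> c ` P"
  using inj_on_image_mem_iff[OF rainbow_path_inj_on[OF assms(1)] assms(3,2)] assms(4) by blast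

lemma proper_colouring_inj_on:
  assumes "proper_colouring E c" "F \<subseteq> E" "\<And>e f. e \<in> F \<Longrightarrow> f \<in> F \<Longrightarrow> e \<inter> f \<noteq> {}"
  shows "inj_on c F"
  using assms unfolding proper_colouring_def inj_on_def by (meson subsetD)

lemma card_le_num_colours:
  assumes "c ` E \<subseteq> {..<n}" "X \<subseteq> E" "inj_on c X"
  shows "card X \<le> n"
proof -
  have "card X = card (c ` X)"
    using assms(3) by (simp add: card_image)
  also have "\<dots> \<le> card {..<n}"
    using assms(1,2) by (intro card_mono) auto
  finally show ?thesis by simp
qed

lemma gdist_le: "is_path V E p u v \<Longrightarrow> gdist V E u v \<le> length p - 1"
  unfolding gdist_def by (rule Least_le) blast

lemma gdist_ge:
  assumes "is_path V E q u v" "\<And>p. is_path V E p u v \<Longrightarrow> n \<le> length p - 1"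
  shows "n \<le> gdist V E u v"
proof -
  have "\<exists>p. is_path V E p u v \<and> length p - 1 = gdist V E u v"
    unfolding gdist_def by (rule LeastI_ex) (use assms(1) in blast)
  with assms(2) show ?thesis by force
qed

lemma rc_le_num_colours: "\<lbrakk>c ` E \<subseteq> {..<n}; rainbow_connected V E c\<rbrakk> \<Longrightarrow> rc V E \<le> n"
  unfolding rc_def by (rule Least_le) blast

lemma prc_colouring:
  assumes "graph_connected V E" "finite E"
  obtains c where "c ` E \<subseteq> {..<prc V E}" "proper_colouring E c" "rainbow_connected V E c"
proof -
  obtain c :: "'a set \<Rightarrow> nat" and m where c: "c ` E = {i. i < m}" "inj_on c E"
    using finite_imp_inj_to_nat_seg[OF assms(2)] by blast
  have "proper_colouring E c"
    using c(2) unfolding proper_colouring_def by (auto dest: inj_onD)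
  moreover have "rainbow_connected V E c"
    unfolding rainbow_connected_def
  proof (intro ballI impI)
    fix u v assume "u \<in> V" "v \<in> V"
    then obtain p where p: "is_path V E p u v"
      using assms(1) unfolding graph_connected_def by blast
    then have "rainbow_path c p"
      using inj_on_subset[OF c(2) is_path_edges_subset[OF p]] distinct_path_edges[of p]
      by (simp add: rainbow_path_def distinct_map is_path_def)
    with p show "\<exists>p. is_path V E p u v \<and> rainbow_path c p" by blast
  qed
  moreover have "c ` E \<subseteq> {..<m}"
    using c(1) by auto
  ultimately have "\<exists>n c. c ` E \<subseteq> {..<n} \<and> proper_colouring E c \<and> rainbow_connected V E c"
    by blast
  then have "\<exists>c. c ` E \<subseteq> {..<prc V E} \<and> proper_colouring E c \<and> rainbow_connected V E c"
    unfolding prc_def by (rule LeastI_ex)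
  with that show thesis by blast
qed


(* The triangles of the friendship graph are L, y, y + T for L < y <= L + T. *)
locale tailed_friendship =
  fixes L T :: nat
  assumes two_le_L: "2 \<le> L" and one_le_T: "1 \<le> T"
begin

definition V :: "nat set" where
  "V = {..L + 2 * T}"

definition E :: "nat set set" where
  "E = {{i, Suc i} | i. i < L} \<union> {{L, w} | w. L < w \<and> w \<le> L + 2 * T}
       \<union> {{y, y + T} | y. L < y \<and> y \<le> L + T}"

definition tail_edges :: "nat set set" where
  "tail_edges = (\<lambda>i. {i, Suc i}) ` {..<L}"

lemma mem_V [simp]: "w \<in> V \<longleftrightarrow> w \<le> L + 2 * T"
  by (simp add: V_def)

lemma tail_edge: "i < L \<Longrightarrow> {i, Suc i} \<in> E"
  unfolding E_def by blast

lemma spoke: "L < w \<Longrightarrow> w \<le> L + 2 * T \<Longrightarrow> {L, w} \<in> E"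
  unfolding E_def by blast

lemma rim_edge: "L < y \<Longrightarrow> y \<le> L + T \<Longrightarrow> {y, y + T} \<in> E"
  unfolding E_def by blast

lemma finite_E: "finite E"
  unfolding E_def by (intro finite_UnI finite_image_set) auto

lemma simple: "simple_graph V E"
  unfolding simple_graph_def E_def V_def by fastforce

lemma card_tail_edges: "card tail_edges = L"
  unfolding tail_edges_def by (subst card_image) (auto simp: inj_on_def doubleton_eq_iff)

lemma tail_edges_subset_E: "tail_edges \<subseteq> E"
  unfolding tail_edges_def using tail_edge by blast

lemma tail_edges_atMost: "e \<in> tail_edges \<Longrightarrow> e \<subseteq> {..L}"
  unfolding tail_edges_def by auto

(* Rim edges may reuse colour 0: the rainbow paths between triangle vertices avoid the tail. *)
definition colouring :: "nat set \<Rightarrow> nat" where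
  "colouring e = (if Max e \<le> L then Min e
     else if Min e \<noteq> L then 0
     else if Max e \<le> L + T \<or> T = 1 then L else L + 1)"

lemma colouring_pair [simp]:
  "colouring {a, b} = (if max a b \<le> L then min a b
     else if min a b \<noteq> L then 0
     else if max a b \<le> L + T \<or> T = 1 then L else L + 1)"
  by (simp add: colouring_def)

lemma colouring_range: "colouring ` E \<subseteq> {..<L + min 2 T}"
  using two_le_L one_le_T unfolding E_def by auto

lemma tail_path: "i \<le> j \<Longrightarrow> j \<le> L \<Longrightarrow> is_path V E [i..<Suc j] i j"
  unfolding is_path_def using tail_edge by (auto simp: hd_upt last_upt simp del: upt_Suc)

lemma colouring_tail_path: "j \<le> L \<Longrightarrow> map colouring (path_edges [i..<Suc j]) = [i..<j]"
  by (auto simp: path_edges_upt simp del: upt_Suc intro!: nth_equalityI)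

lemma short_rainbow_path_lt:
  assumes "u \<in> V" "v \<in> V" "u < v"
  shows "\<exists>p. is_path V E p u v \<and> rainbow_path colouring p \<and> length p \<le> L + 2"
proof -
  note edges = tail_edge spoke rim_edge
  note bounds = two_le_L one_le_T
  consider "v \<le> L" | "u \<le> L" "L < v" | "L < u" "v \<le> L + T"
    | "L < u" "u \<le> L + T" "v = u + T" | "L < u" "u \<le> L + T" "L + T < v" "v \<noteq> u + T"
    | "L + T < u"
    using assms(3) by linarith
  then show ?thesis
  proof cases
    case 1
    with assms show ?thesis
      using tail_path[of u v] colouring_tail_path[of v u]
      by (intro exI[of _ "[u..<Suc v]"]) (simp add: rainbow_path_def del: upt_Suc)
  next
    case 2
    let ?p = "[u..<Suc L] @ [v]"
    have "is_path V E ?p u v"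
      using 2 assms by (intro is_path_snoc[OF tail_path[of u L] spoke]) (auto simp del: upt_Suc)
    moreover have "rainbow_path colouring ?p"
      using 2 colouring_tail_path[of L u]
      by (auto simp: rainbow_path_def path_edges_snoc simp del: upt_Suc)
    ultimately show ?thesis by fastforce
  next
    case 3
    then show ?thesis using assms bounds
      by (intro exI[of _ "[u, u + T, L, v]"])
        (auto simp: rainbow_path_def insert_commute intro: edges)
  next
    case 4
    then show ?thesis using assms bounds
      by (intro exI[of _ "[u, v]"]) (auto simp: rainbow_path_def intro: edges)
  next
    case 5
    then show ?thesis using assms bounds
      by (intro exI[of _ "[u, L, v]"]) (auto simp: rainbow_path_def insert_commute intro: edges)
  next
    case 6
    have "{u - T, u} \<in> E"
      using rim_edge[of "u - T"] 6 assms by simp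
    with 6 show ?thesis using assms bounds
      by (intro exI[of _ "[u, u - T, L, v]"])
        (auto simp: rainbow_path_def insert_commute intro: edges)
  qed
qed

lemma short_rainbow_path:
  assumes "u \<in> V" "v \<in> V" "u \<noteq> v"
  shows "\<exists>p. is_path V E p u v \<and> rainbow_path colouring p \<and> length p \<le> L + 2"
proof (cases "u < v")
  case True
  with assms show ?thesis by (intro short_rainbow_path_lt)
next
  case False
  with assms obtain p where "is_path V E p v u" "rainbow_path colouring p" "length p \<le> L + 2"
    using short_rainbow_path_lt[of v u] by auto
  then show ?thesis
    by (intro exI[of _ "rev p"]) (simp add: is_path_rev)
qed

lemma rainbow_connected_colouring: "rainbow_connected V E colouring"
  unfolding rainbow_connected_def using short_rainbow_path by blast

lemma rc_le: "rc V E \<le> L + min 2 T"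
  using colouring_range rainbow_connected_colouring by (rule rc_le_num_colours)

lemma connected: "graph_connected V E"
  unfolding graph_connected_def
proof (intro conjI ballI)
  fix u v assume "u \<in> V" "v \<in> V"
  then have "is_path V E [u] u v \<or> (\<exists>p. is_path V E p u v)"
    using short_rainbow_path[of u v] by (cases "u = v") auto
  then show "\<exists>p. is_path V E p u v" by blast
qed auto

lemma tail_edges_on_path:
  assumes p: "is_path V E p 0 v" and "L < v"
  shows "tail_edges \<subseteq> set (path_edges p)"
proof
  fix e assume "e \<in> tail_edges"
  then obtain i where i: "i < L" "e = {i, Suc i}"
    unfolding tail_edges_def by auto
  obtain a b where ab: "{a, b} \<in> set (path_edges p)" "a \<le> i" "i < b"
    using is_path_crosses[OF p, of "{..i}"] \<open>L < v\<close> i by auto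
  then have "{a, b} \<in> E"
    using is_path_edges_subset[OF p] by blast
  with ab i have "{a, b} = {i, Suc i}"
    unfolding E_def by (auto simp: doubleton_eq_iff)
  with ab i show "e \<in> set (path_edges p)" by simp
qed

lemma spoke_on_path_to_blade:
  assumes p: "is_path V E p u v" and "u \<notin> {y, y + T}" "v \<in> {y, y + T}" "L < y" "y \<le> L + T"
  shows "{L, y} \<in> set (path_edges p) \<or> {L, y + T} \<in> set (path_edges p)"
proof -
  obtain a b where ab: "{a, b} \<in> set (path_edges p)" "a \<notin> {y, y + T}" "b \<in> {y, y + T}"
    using is_path_crosses[OF p, of "- {y, y + T}"] assms(2,3) by auto
  then have "{a, b} \<in> E"
    using is_path_edges_subset[OF p] by blast
  with ab assms(4,5) have "a = L"
    unfolding E_def by (auto simp: doubleton_eq_iff)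
  with ab show ?thesis by auto
qed

lemma last_edge_on_path_to_blade:
  assumes p: "is_path V E p u v" and "u \<noteq> v" "v \<in> {y, y + T}" "L < y" "y \<le> L + T"
  shows "{L, v} \<in> set (path_edges p) \<or> {y, y + T} \<in> set (path_edges p)"
proof -
  obtain a b where ab: "{a, b} \<in> set (path_edges p)" "a \<noteq> v" "b = v"
    using is_path_crosses[OF p, of "- {v}"] assms(2) by auto
  then have "{a, v} \<in> E"
    using is_path_edges_subset[OF p] by blast
  with ab assms(3-5) have "{a, v} = {L, v} \<or> {a, v} = {y, y + T}"
    unfolding E_def by (auto simp: doubleton_eq_iff)
  with ab show ?thesis by auto
qed

definition on_rainbow_path :: "(nat set \<Rightarrow> nat) \<Rightarrow> nat set \<Rightarrow> bool" where
  "on_rainbow_path c e \<longleftrightarrow>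
     (\<exists>p v. is_path V E p 0 v \<and> L < v \<and> rainbow_path c p \<and> e \<in> set (path_edges p))"

lemma on_rainbow_pathI:
  "\<lbrakk>is_path V E p 0 v; L < v; rainbow_path c p; e \<in> set (path_edges p)\<rbrakk> \<Longrightarrow> on_rainbow_path c e"
  unfolding on_rainbow_path_def by blast

lemma colours_beyond_tail:
  assumes c: "proper_colouring E c" "rainbow_connected V E c" "c ` E \<subseteq> {..<n}"
    and F: "F \<subseteq> E" "\<And>e f. e \<in> F \<Longrightarrow> f \<in> F \<Longrightarrow> e \<inter> f \<noteq> {}" "\<And>e. e \<in> F \<Longrightarrow> \<not> e \<subseteq> {..L}"
    and on_path: "\<And>e. e \<in> F \<Longrightarrow> on_rainbow_path c e"
  shows "L + card F \<le> n"
proof -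
  obtain p where p: "is_path V E p 0 (L + 1)" "rainbow_path c p"
    using rainbow_connectedE[OF c(2), of 0 "L + 1"] one_le_T by auto
  have inj_tail: "inj_on c tail_edges"
    using inj_on_subset[OF rainbow_path_inj_on[OF p(2)] tail_edges_on_path[OF p(1)]] by simp
  have disjoint: "tail_edges \<inter> F = {}"
    using F(3) tail_edges_atMost by blast
  have new_colour: "c e \<notin> c ` tail_edges" if e: "e \<in> F" for e
  proof -
    obtain q v where q: "is_path V E q 0 v" "L < v" "rainbow_path c q" "e \<in> set (path_edges q)"
      using on_path[OF e] unfolding on_rainbow_path_def by blast
    moreover have "e \<notin> tail_edges"
      using disjoint e by blast
    ultimately show ?thesis
      using rainbow_path_new_colour[OF q(3) tail_edges_on_path[OF q(1,2)]] by blast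
  qed
  have "inj_on c (tail_edges \<union> F)"
  proof (subst inj_on_Un, intro conjI)
    show "inj_on c F"
      using proper_colouring_inj_on[OF c(1) F(1,2)] .
    show "c ` (tail_edges - F) \<inter> c ` (F - tail_edges) = {}"
      using new_colour by (auto simp: image_iff) metis
  qed (fact inj_tail)
  then have "card (tail_edges \<union> F) \<le> n"
    using card_le_num_colours[OF c(3)] tail_edges_subset_E F(1) by (meson Un_least)
  moreover have "card (tail_edges \<union> F) = L + card F"
    using disjoint finite_subset[OF F(1) finite_E] finite_subset[OF tail_edges_subset_E finite_E]
    by (simp add: card_Un_disjoint card_tail_edges)
  ultimately show ?thesis by simp
qed

lemma colours_ge_L_plus_T:
  assumes c: "proper_colouring E c" "rainbow_connected V E c" "c ` E \<subseteq> {..<n}"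
  shows "L + T \<le> n"
proof -
  have "\<forall>y \<in> {L<..L + T}. \<exists>s \<in> {{L, y}, {L, y + T}}. on_rainbow_path c s"
  proof
    fix y assume y: "y \<in> {L<..L + T}"
    then obtain p where p: "is_path V E p 0 y" "rainbow_path c p"
      using rainbow_connectedE[OF c(2), of 0 y] by auto
    with spoke_on_path_to_blade[OF p(1), of y] y show "\<exists>s \<in> {{L, y}, {L, y + T}}. on_rainbow_path c s"
      using on_rainbow_pathI[OF p(1) _ p(2)] by auto
  qed
  then obtain s where s: "\<And>y. y \<in> {L<..L + T} \<Longrightarrow> s y \<in> {{L, y}, {L, y + T}} \<and> on_rainbow_path c (s y)"
    using bchoice by (metis Bex_def)
  have "inj_on s {L<..L + T}"
  proof (rule inj_onI)
    fix y y' assume "y \<in> {L<..L + T}" "y' \<in> {L<..L + T}" "s y = s y'"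
    with s[of y] s[of y'] show "y = y'"
      by (auto simp: doubleton_eq_iff)
  qed
  moreover have "L \<in> s y" "s y \<in> E" "\<not> s y \<subseteq> {..L}" if "y \<in> {L<..L + T}" for y
    using s[OF that] spoke[of y] spoke[of "y + T"] that by auto
  then have "L + card (s ` {L<..L + T}) \<le> n"
    using s by (intro colours_beyond_tail[OF c]) blast+
  ultimately show ?thesis by (simp add: card_image)
qed

definition first_triangle :: "nat set set" where
  "first_triangle = {{L, L + 1}, {L, L + 1 + T}, {L + 1, L + 1 + T}}"

lemma first_triangle_subset_E: "first_triangle \<subseteq> E"
  using spoke[of "L + 1"] spoke[of "L + 1 + T"] rim_edge[of "L + 1"] one_le_T
  by (simp add: first_triangle_def)

lemma first_triangle_beyond_tail: "e \<in> first_triangle \<Longrightarrow> \<not> e \<subseteq> {..L}"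
  by (auto simp: first_triangle_def)

lemma first_triangle_meet: "e \<in> first_triangle \<Longrightarrow> f \<in> first_triangle \<Longrightarrow> e \<inter> f \<noteq> {}"
  unfolding first_triangle_def by (elim insertE emptyE) (simp_all add: Int_insert_left)

(* A path to L + 1 uses {L, L + 1} or both other edges of the triangle, and symmetrically
   for L + 1 + T. *)
lemma first_triangle_on_paths:
  assumes py: "is_path V E py 0 (L + 1)" and pz: "is_path V E pz 0 (L + 1 + T)"
  shows "2 \<le> card (first_triangle \<inter> (set (path_edges py) \<union> set (path_edges pz)))"
proof -
  define A B C where "A = {L, L + 1}" and "B = {L, L + 1 + T}" and "C = {L + 1, L + 1 + T}"
  define U where "U = set (path_edges py) \<union> set (path_edges pz)"
  have two: "2 \<le> card (first_triangle \<inter> U)"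
    if "X \<in> {A, B, C}" "Y \<in> {A, B, C}" "X \<noteq> Y" "X \<in> U" "Y \<in> U" for X Y
  proof -
    have "card {X, Y} \<le> card (first_triangle \<inter> U)"
      using that by (intro card_mono) (auto simp: first_triangle_def A_def B_def C_def)
    with \<open>X \<noteq> Y\<close> show ?thesis by simp
  qed
  have "A \<in> set (path_edges py) \<or> B \<in> set (path_edges py)"
    using spoke_on_path_to_blade[OF py, of "L + 1"] one_le_T by (simp add: A_def B_def)
  moreover have "A \<in> set (path_edges py) \<or> C \<in> set (path_edges py)"
    using last_edge_on_path_to_blade[OF py, of "L + 1"] one_le_T by (simp add: A_def C_def)
  moreover have "A \<in> set (path_edges pz) \<or> B \<in> set (path_edges pz)"
    using spoke_on_path_to_blade[OF pz, of "L + 1"] one_le_T by (simp add: A_def B_def)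
  moreover have "B \<in> set (path_edges pz) \<or> C \<in> set (path_edges pz)"
    using last_edge_on_path_to_blade[OF pz, of "L + 1"] one_le_T by (simp add: B_def C_def)
  ultimately consider "A \<in> U" "B \<in> U" | "A \<in> U" "C \<in> U" | "B \<in> U" "C \<in> U"
    unfolding U_def by blast
  moreover have "A \<noteq> B" "A \<noteq> C" "B \<noteq> C"
    using one_le_T by (auto simp: A_def B_def C_def doubleton_eq_iff)
  ultimately show ?thesis
    unfolding U_def[symmetric] using two[of A B] two[of A C] two[of B C] by cases simp_all
qed

lemma colours_ge_L_plus_2:
  assumes c: "proper_colouring E c" "rainbow_connected V E c" "c ` E \<subseteq> {..<n}"
  shows "L + 2 \<le> n"
proof -
  obtain py where py: "is_path V E py 0 (L + 1)" "rainbow_path c py"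
    using rainbow_connectedE[OF c(2), of 0 "L + 1"] one_le_T by auto
  obtain pz where pz: "is_path V E pz 0 (L + 1 + T)" "rainbow_path c pz"
    using rainbow_connectedE[OF c(2), of 0 "L + 1 + T"] one_le_T by auto
  define F where "F = first_triangle \<inter> (set (path_edges py) \<union> set (path_edges pz))"
  have "on_rainbow_path c e" if "e \<in> F" for e
    using that on_rainbow_pathI[OF py(1) _ py(2)] on_rainbow_pathI[OF pz(1) _ pz(2)]
    by (auto simp: F_def)
  then have "L + card F \<le> n"
    using first_triangle_subset_E first_triangle_meet first_triangle_beyond_tail
    by (intro colours_beyond_tail[OF c]) (auto simp: F_def)
  with first_triangle_on_paths[OF py(1) pz(1)] show ?thesis
    by (simp add: F_def)
qed

lemma prc_ge: "L + max 2 T \<le> prc V E"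
proof -
  obtain c where c: "proper_colouring E c" "rainbow_connected V E c" "c ` E \<subseteq> {..<prc V E}"
    using prc_colouring[OF connected finite_E] by metis
  show ?thesis
    using colours_ge_L_plus_2[OF c] colours_ge_L_plus_T[OF c] by simp
qed

lemma length_path_to_blade_ge:
  assumes p: "is_path V E p 0 (L + 1)"
  shows "L + 1 \<le> length p - 1"
proof -
  obtain e where e: "e \<in> set (path_edges p)" "e \<in> {{L, L + 1}, {L, L + 1 + T}}"
    using spoke_on_path_to_blade[OF p, of "L + 1"] one_le_T by auto
  then have "\<not> e \<subseteq> {..L}"
    by auto
  then have "e \<notin> tail_edges"
    using tail_edges_atMost by blast
  then have "L + 1 = card (insert e tail_edges)"
    using finite_subset[OF tail_edges_subset_E finite_E] by (simp add: card_tail_edges)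
  also have "\<dots> \<le> card (set (path_edges p))"
    using tail_edges_on_path[OF p] e(1) by (intro card_mono) auto
  also have "\<dots> \<le> length p - 1"
    using card_length[of "path_edges p"] by (simp add: length_path_edges)
  finally show ?thesis .
qed

lemma diam_eq: "diam V E = L + 1"
  unfolding diam_def
proof (rule Max_eqI)
  show "finite {gdist V E u v | u v. u \<in> V \<and> v \<in> V}"
    by (rule finite_image_set2) (simp_all add: V_def)
next
  fix d assume "d \<in> {gdist V E u v | u v. u \<in> V \<and> v \<in> V}"
  then obtain u v where d: "d = gdist V E u v" "u \<in> V" "v \<in> V"
    by blast
  show "d \<le> L + 1"
  proof (cases "u = v")
    case True
    with d have "is_path V E [u] u v" by simp
    with d show ?thesis using gdist_le by fastforce
  next
    case False
    with d obtain p where "is_path V E p u v" "length p \<le> L + 2"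
      using short_rainbow_path by blast
    with d show ?thesis using gdist_le[of V E p u v] by linarith
  qed
next
  obtain p where p: "is_path V E p 0 (L + 1)" "length p \<le> L + 2"
    using short_rainbow_path[of 0 "L + 1"] one_le_T by auto
  then have "gdist V E 0 (L + 1) = L + 1"
    using gdist_le[OF p(1)] gdist_ge[OF p(1) length_path_to_blade_ge] by linarith
  with one_le_T show "L + 1 \<in> {gdist V E u v | u v. u \<in> V \<and> v \<in> V}"
    by (intro CollectI exI[of _ 0] exI[of _ "L + 1"]) simp
qed

lemma degree_hub: "degree E L = 2 * T + 1"
proof -
  have tail: "{e \<in> {{i, Suc i} | i. i < L}. L \<in> e} = {{L - 1, L}}"
    using two_le_L by auto
  have spokes: "{e \<in> {{L, w} | w. L < w \<and> w \<le> L + 2 * T}. L \<in> e} = (\<lambda>w. {L, w}) ` {L<..L + 2 * T}"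
    by auto
  have rims: "{e \<in> {{y, y + T} | y. L < y \<and> y \<le> L + T}. L \<in> e} = {}"
    by auto
  have "{e \<in> E. L \<in> e} = insert {L - 1, L} ((\<lambda>w. {L, w}) ` {L<..L + 2 * T})"
    unfolding E_def Un_iff conj_disj_distribR Collect_disj_eq tail spokes rims by simp
  moreover have "{L - 1, L} \<notin> (\<lambda>w. {L, w}) ` {L<..L + 2 * T}"
    by (auto simp: doubleton_eq_iff)
  moreover have "inj_on (\<lambda>w. {L, w}) {L<..L + 2 * T}"
    by (auto simp: inj_on_def doubleton_eq_iff)
  ultimately show ?thesis
    unfolding degree_def by (simp add: card_image)
qed

lemma degree_le_2:
  assumes "u \<in> V" "u \<noteq> L"
  shows "degree E u \<le> 2"
proof -
  obtain e f where "{e' \<in> E. u \<in> e'} \<subseteq> {e, f}"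
  proof (cases "u < L")
    case True
    then show ?thesis
      by (intro that[of "{u - 1, u}" "{u, Suc u}"]) (auto simp: E_def doubleton_eq_iff)
  next
    case False
    with assms show ?thesis
      by (intro that[of "{L, u}" "if u \<le> L + T then {u, u + T} else {u - T, u}"])
        (auto simp: E_def doubleton_eq_iff)
  qed
  then have "degree E u \<le> card {e, f}"
    unfolding degree_def by (intro card_mono) auto
  also have "\<dots> \<le> 2"
    by (simp add: card_insert_if)
  finally show ?thesis .
qed

lemma max_degree_eq: "max_degree V E = 2 * T + 1"
  unfolding max_degree_def
proof (rule Max_eqI)
  show "finite (degree E ` V)"
    by (simp add: V_def)
  show "d \<le> 2 * T + 1" if "d \<in> degree E ` V" for d
    using that degree_hub degree_le_2 one_le_T by force
  show "2 * T + 1 \<in> degree E ` V"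
    using degree_hub by (intro image_eqI[of _ _ L]) auto
qed

end

lemma min_plus_le_max_square:
  fixes t :: nat
  assumes "1 \<le> t"
  shows "min 2 (t\<^sup>2) + t \<le> max 2 (t\<^sup>2)"
proof (cases "t = 1")
  case False
  with assms have "2 \<le> t" by simp
  then have "2 * t \<le> t\<^sup>2"
    unfolding power2_eq_square by (rule mult_le_mono1)
  with \<open>2 \<le> t\<close> show ?thesis by simp
qed simp

theorem theorem3p4:
  fixes k t :: nat
  assumes "1 \<le> t" and "t \<le> k"
  shows "\<exists>(V :: nat set) E. simple_graph V E \<and> graph_connected V E
           \<and> max_degree V E = 2 * t^2 + 1
           \<and> diam V E = 2 * t^2 + 1 + k
           \<and> prc V E \<ge> rc V E + t"
proof -
  define T where "T = t\<^sup>2"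
  define L where "L = 2 * t\<^sup>2 + k"
  have "1 \<le> T"
    using assms(1) by (simp add: T_def)
  then interpret G: tailed_friendship L T
    by unfold_locales (simp_all add: L_def T_def[symmetric])
  have "rc G.V G.E + t \<le> L + min 2 T + t"
    using G.rc_le by simp
  also have "\<dots> \<le> L + max 2 T"
    using min_plus_le_max_square[OF assms(1)] by (simp add: T_def)
  also have "\<dots> \<le> prc G.V G.E"
    by (rule G.prc_ge)
  finally show ?thesis
    using G.simple G.connected G.max_degree_eq G.diam_eq
    by (intro exI[of _ G.V] exI[of _ G.E]) (simp add: L_def T_def)
qed

end
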